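(* Let $(B,\tau)$ be a topological space. Let $G(B,\tau)=(R,A,B,p,\partial)$ be the fibrous preorder with $$A=\{(U,x)\mid x\in U\in\tau\},\qquad p(U,x)=x,\qquad (U,x)Ry\iff y\in U,\qquad \partial((U,x),y)=(U,y).$$ Then $(B,\tau)$ is an Alexandrov space (i.e. every intersection of open sets is open) if and only if $G(B,\tau)$ is equivalent to a fibrous preorder of the form $(\le,B,B,1_B,\partial_\le)$ for some preorder $\le$ on $B$. Here $x\mathrel{R}y\iff x\le y$ and $\partial_\le(x,y)=y$.
   Context: A fibrous preorder is a sequence $R\xrightarrow{\partial}A\xrightarrow{p}B$ consisting of the following data: - sets $A$ and $B$; - a map $p\colon A\to B$; - a relation $R\subseteq A\times B$ (write $aRb$ for $(a,b)\in R$); - a map $\partial\colon R\to A$. These must satisfy, for all $a\in A$ and $b,y\in B$ with $aRb$: - (F1) $p\partial(a,b)=b$; - (F2) $aRp(a)$ (this holds for all $a\in A$); - (F3) $\partial(a,b)Ry\Rightarrow aRy$. Two fibrous preorders $(R,A,B,p,\partial)$ and $(R',A',B',p',\partial')$ are equivalent if $B=B'$ and there exist maps $\varphi\colon A\to A'$ and $\gamma\colon A'\to A$ with $p'\varphi=p$ and $p\gamma=p'$ such that, for all $a\in A$, $a'\in A'$ and $b\in B$, $\varphi(a)R'b\Rightarrow aRb$ and $\gamma(a')Rb\Rightarrow a'R'b$. *)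

theory Defs
  imports "HOL-Analysis.Analysis"
begin

text \<open>A fibrous preorder R --d--> A --p--> B. The relation R is a set of pairs,
  the map d is defined on R (values outside R are irrelevant).\<close>
definition fibrous_preorder ::
  "('a \<times> 'b) set \<Rightarrow> 'a set \<Rightarrow> 'b set \<Rightarrow> ('a \<Rightarrow> 'b) \<Rightarrow> ('a \<times> 'b \<Rightarrow> 'a) \<Rightarrow> bool" where
  "fibrous_preorder R A B p d \<longleftrightarrow>
     p ` A \<subseteq> B \<and> R \<subseteq> A \<times> B \<and> d ` R \<subseteq> A \<and>
     (\<forall>a b. (a, b) \<in> R \<longrightarrow> p (d (a, b)) = b) \<and>
     (\<forall>a\<in>A. (a, p a) \<in> R) \<and>
     (\<forall>a b y. (a, b) \<in> R \<longrightarrow> y \<in> B \<longrightarrow> (d (a, b), y) \<in> R \<longrightarrow> (a, y) \<in> R)"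

definition fibrous_equivalent ::
  "('a \<times> 'b) set \<Rightarrow> 'a set \<Rightarrow> 'b set \<Rightarrow> ('a \<Rightarrow> 'b) \<Rightarrow> ('a \<times> 'b \<Rightarrow> 'a) \<Rightarrow>
   ('c \<times> 'b) set \<Rightarrow> 'c set \<Rightarrow> 'b set \<Rightarrow> ('c \<Rightarrow> 'b) \<Rightarrow> ('c \<times> 'b \<Rightarrow> 'c) \<Rightarrow> bool" where
  "fibrous_equivalent R A B p d R' A' B' p' d' \<longleftrightarrow>
     B = B' \<and>
     (\<exists>\<phi> \<gamma>. \<phi> ` A \<subseteq> A' \<and> \<gamma> ` A' \<subseteq> A \<and>
        (\<forall>a\<in>A. p' (\<phi> a) = p a) \<and> (\<forall>a'\<in>A'. p (\<gamma> a') = p' a') \<and>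
        (\<forall>a\<in>A. \<forall>b\<in>B. (\<phi> a, b) \<in> R' \<longrightarrow> (a, b) \<in> R) \<and>
        (\<forall>a'\<in>A'. \<forall>b\<in>B. (\<gamma> a', b) \<in> R \<longrightarrow> (a', b) \<in> R'))"

definition G_A :: "'b topology \<Rightarrow> ('b set \<times> 'b) set" where
  "G_A T = {(U, x). openin T U \<and> x \<in> U}"

definition G_R :: "'b topology \<Rightarrow> (('b set \<times> 'b) \<times> 'b) set" where
  "G_R T = {((U, x), y). (U, x) \<in> G_A T \<and> y \<in> U}"

definition G_p :: "'b set \<times> 'b \<Rightarrow> 'b" where
  "G_p = snd"

definition G_d :: "('b set \<times> 'b) \<times> 'b \<Rightarrow> 'b set \<times> 'b" where
  "G_d = (\<lambda>((U, x), y). (U, y))"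

text \<open>Alexandrov space: every intersection of (a nonempty family of) open sets is open;
  the empty intersection is the whole space, which is open anyway.\<close>
definition alexandrov_space :: "'b topology \<Rightarrow> bool" where
  "alexandrov_space T \<longleftrightarrow> (\<forall>F. F \<noteq> {} \<and> (\<forall>U\<in>F. openin T U) \<longrightarrow> openin T (\<Inter>F))"

end

theory Submission
  imports Defs
begin

text \<open>A space is Alexandrov exactly when every point has a smallest open neighbourhood.
  The specialization preorder (\<open>y\<close> lies in every open set containing \<open>x\<close>) then models
  \<open>G(B,\<tau>)\<close>: a pair \<open>(U, x)\<close> is compared with the point \<open>x\<close>, and a point \<open>x\<close> with its
  smallest open neighbourhood. Conversely, an equivalence \<open>\<gamma>\<close> with a preorder assigns to each
  point \<open>x\<close> an open set \<open>\<gamma> x = (V, x)\<close>, and the two transfer conditions force \<open>V\<close> to lie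
  inside every open neighbourhood of \<open>x\<close>.\<close>

definition minimal_nbhd :: "'a topology \<Rightarrow> 'a \<Rightarrow> 'a set" where
  "minimal_nbhd T x = \<Inter>{U. openin T U \<and> x \<in> U}"

definition specialization_rel :: "'a topology \<Rightarrow> 'a rel" where
  "specialization_rel T =
     {(x, y). x \<in> topspace T \<and> y \<in> topspace T \<and> y \<in> minimal_nbhd T x}"

lemma mem_minimal_nbhd: "x \<in> minimal_nbhd T x"
  unfolding minimal_nbhd_def by blast

lemma minimal_nbhd_subset: "openin T U \<Longrightarrow> x \<in> U \<Longrightarrow> minimal_nbhd T x \<subseteq> U"
  unfolding minimal_nbhd_def by blast

lemma preorder_on_specialization_rel: "preorder_on (topspace T) (specialization_rel T)"
  unfolding preorder_on_def refl_on_def trans_def specialization_rel_def minimal_nbhd_def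
  by blast

lemma alexandrov_space_iff_openin_minimal_nbhd:
  "alexandrov_space T \<longleftrightarrow> (\<forall>x\<in>topspace T. openin T (minimal_nbhd T x))"
proof
  assume alex: "alexandrov_space T"
  show "\<forall>x\<in>topspace T. openin T (minimal_nbhd T x)"
  proof
    fix x assume "x \<in> topspace T"
    then have "topspace T \<in> {U. openin T U \<and> x \<in> U}"
      by simp
    then have "{U. openin T U \<and> x \<in> U} \<noteq> {}"
      by blast
    then show "openin T (minimal_nbhd T x)"
      using alex unfolding alexandrov_space_def minimal_nbhd_def by simp
  qed
next
  assume minimal_open: "\<forall>x\<in>topspace T. openin T (minimal_nbhd T x)"
  show "alexandrov_space T"
    unfolding alexandrov_space_def
  proof (intro allI impI)
    fix F assume F: "F \<noteq> {} \<and> (\<forall>U\<in>F. openin T U)"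
    show "openin T (\<Inter>F)"
    proof (subst openin_subopen, intro ballI)
      fix x assume x: "x \<in> \<Inter>F"
      obtain U where "U \<in> F"
        using F by blast
      then have "x \<in> topspace T"
        using F x openin_subset by blast
      moreover have "minimal_nbhd T x \<subseteq> \<Inter>F"
      proof (rule Inter_greatest)
        fix U assume "U \<in> F"
        then show "minimal_nbhd T x \<subseteq> U"
          using F x by (intro minimal_nbhd_subset) auto
      qed
      ultimately show "\<exists>V. openin T V \<and> x \<in> V \<and> V \<subseteq> \<Inter>F"
        using minimal_open mem_minimal_nbhd by fast
    qed
  qed
qed

lemma alexandrov_space_imp_fibrous_equivalent_specialization:
  assumes "alexandrov_space T"
  shows "fibrous_equivalent (G_R T) (G_A T) (topspace T) G_p G_d
           (specialization_rel T) (topspace T) (topspace T) id d"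
proof -
  have minimal_open: "openin T (minimal_nbhd T x)" if "x \<in> topspace T" for x
    using assms that by (simp add: alexandrov_space_iff_openin_minimal_nbhd)
  show ?thesis
    unfolding fibrous_equivalent_def
  proof (intro conjI refl exI[of _ snd] exI[of _ "\<lambda>x. (minimal_nbhd T x, x)"])
    show "snd ` G_A T \<subseteq> topspace T"
      unfolding G_A_def using openin_subset by fastforce
    show "(\<lambda>x. (minimal_nbhd T x, x)) ` topspace T \<subseteq> G_A T"
      unfolding G_A_def using minimal_open mem_minimal_nbhd by auto
    show "\<forall>a\<in>G_A T. id (snd a) = G_p a"
      by (simp add: G_p_def)
    show "\<forall>x\<in>topspace T. G_p (minimal_nbhd T x, x) = id x"
      by (simp add: G_p_def)
    show "\<forall>a\<in>G_A T. \<forall>y\<in>topspace T. (snd a, y) \<in> specialization_rel T \<longrightarrow> (a, y) \<in> G_R T"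
      unfolding G_A_def G_R_def specialization_rel_def using minimal_nbhd_subset by fastforce
    show "\<forall>x\<in>topspace T. \<forall>y\<in>topspace T.
            ((minimal_nbhd T x, x), y) \<in> G_R T \<longrightarrow> (x, y) \<in> specialization_rel T"
      unfolding G_R_def specialization_rel_def by auto
  qed
qed

lemma fibrous_equivalent_imp_openin_minimal_nbhd:
  assumes equiv: "fibrous_equivalent (G_R T) (G_A T) (topspace T) G_p G_d
                    le (topspace T) (topspace T) id d"
    and x: "x \<in> topspace T"
  shows "openin T (minimal_nbhd T x)"
proof -
  obtain \<phi> \<gamma> where
    \<gamma>_A: "\<gamma> ` topspace T \<subseteq> G_A T"
    and \<phi>_p: "\<forall>a\<in>G_A T. \<phi> a = G_p a" and \<gamma>_p: "\<forall>x\<in>topspace T. G_p (\<gamma> x) = x"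
    and \<phi>_R: "\<forall>a\<in>G_A T. \<forall>y\<in>topspace T. (\<phi> a, y) \<in> le \<longrightarrow> (a, y) \<in> G_R T"
    and \<gamma>_R: "\<forall>x\<in>topspace T. \<forall>y\<in>topspace T. (\<gamma> x, y) \<in> G_R T \<longrightarrow> (x, y) \<in> le"
    using equiv unfolding fibrous_equivalent_def by auto
  obtain V where \<gamma>_x: "\<gamma> x = (V, x)"
    using \<gamma>_p x by (metis G_p_def prod.collapse)
  have V_A: "(V, x) \<in> G_A T"
    using \<gamma>_A x \<gamma>_x by force
  then have V_open: "openin T V" and "x \<in> V"
    by (auto simp: G_A_def)
  have "V \<subseteq> U" if U: "openin T U" "x \<in> U" for U
  proof
    fix y assume y: "y \<in> V"
    then have y_T: "y \<in> topspace T"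
      using V_open openin_subset by blast
    have "(x, y) \<in> le"
      using \<gamma>_R x y_T \<gamma>_x V_A y by (auto simp: G_R_def)
    moreover have U_A: "(U, x) \<in> G_A T"
      using U by (simp add: G_A_def)
    ultimately have "((U, x), y) \<in> G_R T"
      using \<phi>_R \<phi>_p y_T by (simp add: G_p_def)
    then show "y \<in> U"
      by (simp add: G_R_def)
  qed
  then have "V \<subseteq> minimal_nbhd T x"
    unfolding minimal_nbhd_def by (intro Inter_greatest) auto
  then have "minimal_nbhd T x = V"
    using minimal_nbhd_subset[OF V_open \<open>x \<in> V\<close>] by (rule subset_antisym[rotated])
  then show ?thesis
    using V_open by simp
qed

theorem mainTheorem6:
  fixes T :: "'b topology"
  shows "alexandrov_space T \<longleftrightarrow>
    (\<exists>le. preorder_on (topspace T) le \<and>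
       fibrous_equivalent (G_R T) (G_A T) (topspace T) G_p G_d
         le (topspace T) (topspace T) id (\<lambda>(x, y). y))"
proof
  assume "alexandrov_space T"
  then show "\<exists>le. preorder_on (topspace T) le \<and>
       fibrous_equivalent (G_R T) (G_A T) (topspace T) G_p G_d
         le (topspace T) (topspace T) id (\<lambda>(x, y). y)"
    by (intro exI[of _ "specialization_rel T"] conjI preorder_on_specialization_rel
        alexandrov_space_imp_fibrous_equivalent_specialization)
next
  assume "\<exists>le. preorder_on (topspace T) le \<and>
       fibrous_equivalent (G_R T) (G_A T) (topspace T) G_p G_d
         le (topspace T) (topspace T) id (\<lambda>(x, y). y)"
  then obtain le where equiv: "fibrous_equivalent (G_R T) (G_A T) (topspace T) G_p G_d
                                 le (topspace T) (topspace T) id (\<lambda>(x, y). y)"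
    by blast
  show "alexandrov_space T"
    unfolding alexandrov_space_iff_openin_minimal_nbhd
    by (intro ballI fibrous_equivalent_imp_openin_minimal_nbhd[OF equiv])
qed

end
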